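(* Let $n\ge 1$, $\sigma>0$, $b>0$, $\mathbf{a}\in\mathbb{R}^n$, let $\mathbf{D}\in\mathbb{R}^{n\times n}$ be a diagonal matrix with positive diagonal entries, and let $\mathbf{e}\in\mathbb{R}^n$ be the all-ones vector. Consider the problem $$\min_{\mathbf{x}\in\mathbb{R}^n}\ f(\mathbf{x})=\mathbf{x}^T\mathbf{a}+\tfrac{\sigma}{2}\mathbf{x}^T\mathbf{D}\mathbf{x}+\tfrac{\sigma}{2}(\mathbf{e}^T\mathbf{x})^2\quad\text{subject to } 0\le \mathbf{x}\le b\,\mathbf{e}.$$ Define $F:\mathbb{R}\to\mathbb{R}$ by $F(\tau)=\tau-\mathbf{e}^T P\big[-\tfrac{1}{\sigma}\mathbf{D}^{-1}(\mathbf{a}+\sigma\tau\mathbf{e});0,b\big]$. Let $\tau^*$ be a root of $F$, and set $\mathbf{x}^*=P\big[-\tfrac{1}{\sigma}\mathbf{D}^{-1}(\mathbf{a}+\sigma\tau^*\mathbf{e});0,b\big]$. Then $\mathbf{x}^*$ satisfies the first-order KKT condition $$\mathbf{x}^*-P\big[\mathbf{x}^*-\nabla f(\mathbf{x}^* );0,b\big]=0 .$$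
   Context: For $\mathbf{z}\in\mathbb{R}^n$, $P[\mathbf{z};0,b]$ denotes the componentwise projection of $\mathbf{z}$ onto the box $[0,b]^n$, i.e. $(P[\mathbf{z};0,b])_i=\min(\max(z_i,0),b)$. *)

theory Defs
  imports "HOL-Analysis.Analysis"
begin

definition box_proj :: "real ^ 'n \<Rightarrow> real \<Rightarrow> real ^ 'n" where
  "box_proj z b = (\<chi> i. min (max (z $ i) 0) b)"

abbreviation ones :: "real ^ 'n" where
  "ones \<equiv> vec 1"

definition obj :: "real ^ 'n \<Rightarrow> real \<Rightarrow> real ^ 'n ^ 'n \<Rightarrow> real ^ 'n \<Rightarrow> real" where
  "obj a \<sigma> D x = x \<bullet> a + \<sigma> / 2 * (x \<bullet> (D *v x)) + \<sigma> / 2 * (ones \<bullet> x)\<^sup>2"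

definition Fbox :: "real ^ 'n \<Rightarrow> real \<Rightarrow> real ^ 'n ^ 'n \<Rightarrow> real \<Rightarrow> real \<Rightarrow> real" where
  "Fbox a \<sigma> D b \<tau> = \<tau> - ones \<bullet> box_proj (- (1 / \<sigma>) *\<^sub>R (matrix_inv D *v (a + (\<sigma> * \<tau>) *\<^sub>R ones))) b"

end

theory Submission
  imports Defs
begin

text \<open>
  At a root \<tau>* of F we have
  \<tau>* = e'x*, so the gradient at x* is componentwise \<sigma> D_ii (x*_i - y_i), where
  y = -(1/\<sigma>) D^-1 (a + \<sigma> \<tau>* e) is the point whose clamp is x*. Such a gradient
  step is undone by the clamp: if y_i lies in [0,b] the gradient component vanishes,
  and otherwise x*_i sits on the bound that y_i overshoots and the gradient pushes
  towards y_i, i.e. out of the box.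
\<close>

lemma matrix_inv_eqI:
  fixes A B :: "'a::semiring_1 ^ 'n ^ 'n"
  assumes "A ** B = mat 1" and "B ** A = mat 1"
  shows "matrix_inv A = B"
proof -
  define M where "M = matrix_inv A"
  have "A ** M = mat 1 \<and> M ** A = mat 1"
    unfolding M_def matrix_inv_def by (rule someI[of _ B]) (use assms in auto)
  then have "B = B ** (A ** M)" by (simp add: matrix_mul_rid)
  also have "\<dots> = (B ** A) ** M" by (simp add: matrix_mul_assoc)
  also have "\<dots> = M" using assms(2) by (simp add: matrix_mul_lid)
  finally show ?thesis unfolding M_def by simp
qed

lemma diagonal_matrix_vector_mult:
  fixes D :: "'a::semiring_1 ^ 'n ^ 'n"
  assumes "\<And>i j. i \<noteq> j \<Longrightarrow> D $ i $ j = 0"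
  shows "D *v v = (\<chi> i. D $ i $ i * v $ i)"
proof -
  have "(\<Sum>j\<in>UNIV. D $ i $ j * v $ j) = D $ i $ i * v $ i" for i
    by (subst sum.remove[of _ i]) (auto simp: assms intro!: sum.neutral)
  then show ?thesis unfolding matrix_vector_mult_def by (simp add: vec_eq_iff)
qed

lemma diagonal_matrix_mult:
  fixes A B :: "'a::semiring_1 ^ 'n ^ 'n"
  assumes "\<And>i j. i \<noteq> j \<Longrightarrow> A $ i $ j = 0" and "\<And>i j. i \<noteq> j \<Longrightarrow> B $ i $ j = 0"
  shows "A ** B = (\<chi> i j. if i = j then A $ i $ i * B $ i $ i else 0)"
proof -
  have "(\<Sum>k\<in>UNIV. A $ i $ k * B $ k $ j) = (if i = j then A $ i $ i * B $ i $ i else 0)" for i j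
    by (subst sum.remove[of _ i]) (auto simp: assms intro!: sum.neutral)
  then show ?thesis unfolding matrix_matrix_mult_def by (simp add: vec_eq_iff)
qed

lemma matrix_inv_diagonal:
  fixes D :: "'a::field ^ 'n ^ 'n"
  assumes "\<And>i j. i \<noteq> j \<Longrightarrow> D $ i $ j = 0" and "\<And>i. D $ i $ i \<noteq> 0"
  shows "matrix_inv D = (\<chi> i j. if i = j then inverse (D $ i $ i) else 0)"
  by (intro matrix_inv_eqI; subst diagonal_matrix_mult)
     (use assms in \<open>auto simp: mat_def vec_eq_iff\<close>)

lemma matrix_inv_diagonal_vector_mult:
  fixes D :: "'a::field ^ 'n ^ 'n"
  assumes "\<And>i j. i \<noteq> j \<Longrightarrow> D $ i $ j = 0" and "\<And>i. D $ i $ i \<noteq> 0"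
  shows "matrix_inv D *v v = (\<chi> i. v $ i / D $ i $ i)"
  by (subst diagonal_matrix_vector_mult)
     (simp_all add: matrix_inv_diagonal[OF assms] divide_inverse mult.commute)

lemma gderiv_obj:
  fixes D :: "real ^ 'n ^ 'n"
  assumes "transpose D = D"
  shows "GDERIV (obj a \<sigma> D) x :> a + \<sigma> *\<^sub>R (D *v x) + (\<sigma> * (ones \<bullet> x)) *\<^sub>R ones"
proof -
  have symmetric: "y \<bullet> (D *v h) = h \<bullet> (D *v y)" for y h
    by (metis assms dot_lmul_matrix inner_commute vector_transpose_matrix)
  have "((*v) D has_derivative (*v) D) (at x)"
    by (rule bounded_linear_imp_has_derivative) simp
  then have "(obj a \<sigma> D has_derivative (\<lambda>h. h \<bullet> a + \<sigma> / 2 * (h \<bullet> (D *v x) + x \<bullet> (D *v h))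
      + \<sigma> / 2 * (2 * (ones \<bullet> x) * (ones \<bullet> h)))) (at x)"
    unfolding obj_def[abs_def]
    by (auto intro!: derivative_eq_intros simp: algebra_simps)
  then show ?thesis
    unfolding gderiv_def
    by (rule has_derivative_eq_rhs)
       (simp add: fun_eq_iff symmetric inner_add_right inner_commute algebra_simps)
qed

lemma clamp_fixed_point:
  fixes x y c b :: real
  assumes "0 \<le> b" and "0 < c" and "x = min (max y 0) b"
  shows "min (max (x - c * (x - y)) 0) b = x"
proof -
  consider "y < 0" "x = 0" | "b < y" "x = b" | "x = y"
    using assms(1,3) by linarith
  then show ?thesis
  proof cases
    case 1
    then show ?thesis using assms(1,2) by (simp add: mult_pos_neg)
  next
    case 2
    then have "c * (b - y) < 0" using assms(2) by (simp add: mult_pos_neg)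
    then show ?thesis using 2 by simp
  next
    case 3
    then show ?thesis using assms(3) by simp
  qed
qed

lemma box_proj_fixed_point:
  assumes "0 \<le> b" and "\<And>i. c i > 0"
  shows "box_proj (box_proj y b - (\<chi> i. c i * (box_proj y b $ i - y $ i))) b = box_proj y b"
  using clamp_fixed_point[OF assms(1) assms(2)] by (simp add: box_proj_def vec_eq_iff)

theorem lemma4p1:
  fixes a :: "real ^ 'n" and D :: "real ^ 'n ^ 'n" and \<sigma> b \<tau>s :: real
  assumes "\<sigma> > 0" and "b > 0"
    and "\<And>i j. i \<noteq> j \<Longrightarrow> D $ i $ j = 0"
    and "\<And>i. D $ i $ i > 0"
    and "Fbox a \<sigma> D b \<tau>s = 0"
  shows "let xs = box_proj (- (1 / \<sigma>) *\<^sub>R (matrix_inv D *v (a + (\<sigma> * \<tau>s) *\<^sub>R ones))) b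
         in \<exists>g. (GDERIV (obj a \<sigma> D) xs :> g) \<and> xs - box_proj (xs - g) b = 0"
proof -
  define y where "y = - (1 / \<sigma>) *\<^sub>R (matrix_inv D *v (a + (\<sigma> * \<tau>s) *\<^sub>R ones))"
  define xs where "xs = box_proj y b"
  define g where "g = a + \<sigma> *\<^sub>R (D *v xs) + (\<sigma> * (ones \<bullet> xs)) *\<^sub>R ones"
  have D_nz: "D $ i $ i \<noteq> 0" for i
    using assms(4)[of i] by simp
  have "transpose D = D"
    using assms(3) by (simp add: transpose_def vec_eq_iff) (metis)
  then have "GDERIV (obj a \<sigma> D) xs :> g"
    unfolding g_def by (rule gderiv_obj)
  moreover have "\<tau>s = ones \<bullet> xs"
    using assms(5) unfolding Fbox_def xs_def y_def by simp
  then have "g = (\<chi> i. \<sigma> * D $ i $ i * (xs $ i - y $ i))"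
    using assms(1) D_nz
    by (simp add: g_def y_def vec_eq_iff diagonal_matrix_vector_mult[OF assms(3)]
        matrix_inv_diagonal_vector_mult[OF assms(3) D_nz] field_simps)
  then have "box_proj (xs - g) b = xs"
    unfolding xs_def using assms(1,2,4) by (auto intro: box_proj_fixed_point)
  ultimately show ?thesis
    unfolding Let_def xs_def[symmetric] y_def[symmetric] by auto
qed

end
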